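(* Let $T$ be a finite rooted tree in which every inner node has at least two children, with node set $V$ and leaf set $L$. There exists a family of four bi-colourings $(A_1,B_1),\dots,(A_4,B_4)$ of $L$ identifying $T$.
   Context: A bi-colouring is a pair $(A,B)$ of disjoint subsets of $L$ of equal cardinality. A pair $(\pi,\sigma)$ of injective maps from $S\subseteq V\setminus L$ to $L$ identifies $S$ if for each $s\in S$, $s$ is the least common ancestor of $\pi(s)$ and $\sigma(s)$ (every node is its own ancestor); for $s\in S$ a node $x$ is $s$-requested if it lies on the path from $\pi(s)$ to $\sigma(s)$; the pair has unique request if every node is $s$-requested for at most one $s\in S$. A bi-colouring $(A,B)$ identifies $S$ if some pair $(\pi,\sigma)$ identifying $S$ with unique request has $\pi(S)=A$, $\sigma(S)=B$. A family $(A_1,B_1),\dots,(A_n,B_n)$ of bi-colourings identifies $S$ if there is a partition $(S_1,\dots,S_n)$ of $S$ (parts possibly empty) with $(A_i,B_i)$ identifying $S_i$ for each $i$; it identifies $T$ if it identifies $V\setminus L$. The sets $A_i$, $A_j$, $B_j$ for $i\neq j$ need not be disjoint. *)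

theory Defs
  imports Main
begin

text \<open>A finite rooted tree is represented by its finite node set V, its root r and a
parent function par (with par r = r), such that every node reaches the root by
iterating par.\<close>

definition rooted_tree :: "'a set \<Rightarrow> 'a \<Rightarrow> ('a \<Rightarrow> 'a) \<Rightarrow> bool" where
  "rooted_tree V r par \<longleftrightarrow> finite V \<and> r \<in> V \<and> par r = r \<and>
     (\<forall>v\<in>V. par v \<in> V) \<and> (\<forall>v\<in>V. \<exists>k. (par ^^ k) v = r)"

definition children :: "'a set \<Rightarrow> 'a \<Rightarrow> ('a \<Rightarrow> 'a) \<Rightarrow> 'a \<Rightarrow> 'a set" where
  "children V r par u = {v \<in> V. v \<noteq> r \<and> par v = u}"

definition leaves :: "'a set \<Rightarrow> 'a \<Rightarrow> ('a \<Rightarrow> 'a) \<Rightarrow> 'a set" where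
  "leaves V r par = {v \<in> V. children V r par v = {}}"

definition anc :: "('a \<Rightarrow> 'a) \<Rightarrow> 'a \<Rightarrow> 'a \<Rightarrow> bool" where
  "anc par u v \<longleftrightarrow> (\<exists>k. (par ^^ k) v = u)"

definition is_lca :: "('a \<Rightarrow> 'a) \<Rightarrow> 'a \<Rightarrow> 'a \<Rightarrow> 'a \<Rightarrow> bool" where
  "is_lca par s x y \<longleftrightarrow> anc par s x \<and> anc par s y \<and>
     (\<forall>w. anc par w x \<and> anc par w y \<longrightarrow> anc par w s)"

text \<open>Nodes on the tree path between x and y: ancestors of x or y lying below
every common ancestor of x and y.\<close>
definition tpath :: "'a set \<Rightarrow> ('a \<Rightarrow> 'a) \<Rightarrow> 'a \<Rightarrow> 'a \<Rightarrow> 'a set" where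
  "tpath V par x y = {z \<in> V. (anc par z x \<or> anc par z y) \<and>
     (\<forall>w. anc par w x \<and> anc par w y \<longrightarrow> anc par w z)}"

definition bicolouring :: "'a set \<Rightarrow> 'a \<Rightarrow> ('a \<Rightarrow> 'a) \<Rightarrow> 'a set \<Rightarrow> 'a set \<Rightarrow> bool" where
  "bicolouring V r par A B \<longleftrightarrow> A \<subseteq> leaves V r par \<and> B \<subseteq> leaves V r par \<and>
     A \<inter> B = {} \<and> card A = card B"

definition pair_identifies ::
  "'a set \<Rightarrow> 'a \<Rightarrow> ('a \<Rightarrow> 'a) \<Rightarrow> ('a \<Rightarrow> 'a) \<Rightarrow> ('a \<Rightarrow> 'a) \<Rightarrow> 'a set \<Rightarrow> bool" where
  "pair_identifies V r par \<pi> \<sigma> S \<longleftrightarrow>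
     S \<subseteq> V - leaves V r par \<and> inj_on \<pi> S \<and> inj_on \<sigma> S \<and>
     \<pi> ` S \<subseteq> leaves V r par \<and> \<sigma> ` S \<subseteq> leaves V r par \<and>
     (\<forall>s\<in>S. is_lca par s (\<pi> s) (\<sigma> s))"

definition unique_request ::
  "'a set \<Rightarrow> ('a \<Rightarrow> 'a) \<Rightarrow> ('a \<Rightarrow> 'a) \<Rightarrow> ('a \<Rightarrow> 'a) \<Rightarrow> 'a set \<Rightarrow> bool" where
  "unique_request V par \<pi> \<sigma> S \<longleftrightarrow>
     (\<forall>x\<in>V. \<forall>s\<in>S. \<forall>t\<in>S. x \<in> tpath V par (\<pi> s) (\<sigma> s) \<and>
        x \<in> tpath V par (\<pi> t) (\<sigma> t) \<longrightarrow> s = t)"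

definition bicol_identifies ::
  "'a set \<Rightarrow> 'a \<Rightarrow> ('a \<Rightarrow> 'a) \<Rightarrow> 'a set \<Rightarrow> 'a set \<Rightarrow> 'a set \<Rightarrow> bool" where
  "bicol_identifies V r par A B S \<longleftrightarrow>
     (\<exists>\<pi> \<sigma>. pair_identifies V r par \<pi> \<sigma> S \<and> unique_request V par \<pi> \<sigma> S \<and>
        \<pi> ` S = A \<and> \<sigma> ` S = B)"

definition family_identifies ::
  "'a set \<Rightarrow> 'a \<Rightarrow> ('a \<Rightarrow> 'a) \<Rightarrow> nat \<Rightarrow> (nat \<Rightarrow> 'a set) \<Rightarrow> (nat \<Rightarrow> 'a set) \<Rightarrow> 'a set \<Rightarrow> bool" where
  "family_identifies V r par n A B S \<longleftrightarrow>
     (\<exists>P. (\<Union>i<n. P i) = S \<and> (\<forall>i<n. \<forall>j<n. i \<noteq> j \<longrightarrow> P i \<inter> P j = {}) \<and>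
        (\<forall>i<n. bicol_identifies V r par (A i) (B i) (P i)))"

definition family_identifies_tree ::
  "'a set \<Rightarrow> 'a \<Rightarrow> ('a \<Rightarrow> 'a) \<Rightarrow> nat \<Rightarrow> (nat \<Rightarrow> 'a set) \<Rightarrow> (nat \<Rightarrow> 'a set) \<Rightarrow> bool" where
  "family_identifies_tree V r par n A B \<longleftrightarrow>
     family_identifies V r par n A B (V - leaves V r par)"

end

theory Submission
  imports Defs
begin

(* Take an inner node v of maximal depth, so all its children are leaves,
   and delete them; in the smaller tree v is a leaf.  The induction hypothesis is strengthened:
   besides an identifying colouring (leaf pairs with pairwise disjoint paths inside each colour
   class), every leaf must have a free colour, i.e. one whose paths avoid it.  Back in the full
   tree, v takes its free colour j with two of its children la, lb as pair, and every old pair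
   ending at v is rerouted to la if its colour is k1 and to lb otherwise, where j, k1, k2 are
   distinct.  Then la is free in colour k2 and lb in colour k1, so three colours already
   suffice. *)

abbreviation inner_nodes :: "'a set \<Rightarrow> 'a \<Rightarrow> ('a \<Rightarrow> 'a) \<Rightarrow> 'a set" where
  "inner_nodes V r par \<equiv> V - leaves V r par"

lemma anc_refl: "anc par x x"
  unfolding anc_def by (metis funpow_0)

lemma anc_trans: "anc par x y \<Longrightarrow> anc par y z \<Longrightarrow> anc par x z"
  unfolding anc_def by (metis comp_apply funpow_add)

lemma anc_parent: "anc par (par x) x"
  unfolding anc_def by (metis comp_apply funpow_0 funpow_Suc_right)

lemma anc_iff_parent: "anc par z x \<longleftrightarrow> z = x \<or> anc par z (par x)"
  unfolding anc_def by (metis comp_apply funpow_0 funpow_Suc_right not0_implies_Suc)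

lemma rooted_tree_parent_in: "rooted_tree V r par \<Longrightarrow> x \<in> V \<Longrightarrow> par x \<in> V"
  unfolding rooted_tree_def by blast

lemma funpow_root: "rooted_tree V r par \<Longrightarrow> (par ^^ k) r = r"
  unfolding rooted_tree_def by (induction k) auto

lemma cycle_imp_root:
  assumes T: "rooted_tree V r par" and "y \<in> V" and cycle: "(par ^^ p) y = y" and "p > 0"
  shows "y = r"
proof -
  obtain N where N: "(par ^^ N) y = r" using T \<open>y \<in> V\<close> unfolding rooted_tree_def by blast
  have iterate: "(par ^^ (p * i)) y = y" for i
    using cycle by (induction i) (simp_all add: funpow_add)
  have "p * N = (p * N - N) + N" using \<open>p > 0\<close> by simp
  then have "(par ^^ (p * N)) y = (par ^^ (p * N - N)) ((par ^^ N) y)"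
    by (metis comp_apply funpow_add)
  then show ?thesis using iterate N funpow_root[OF T] by simp
qed

lemma anc_antisym:
  assumes T: "rooted_tree V r par" and "y \<in> V" and "anc par x y" and "anc par y x"
  shows "x = y"
proof -
  obtain k m where k: "(par ^^ k) y = x" and m: "(par ^^ m) x = y"
    using \<open>anc par x y\<close> \<open>anc par y x\<close> unfolding anc_def by blast
  show ?thesis
  proof (cases "m + k = 0")
    case True
    with k show ?thesis by simp
  next
    case False
    have "(par ^^ (m + k)) y = y" using k m by (simp add: funpow_add)
    then have "y = r" using cycle_imp_root[OF T \<open>y \<in> V\<close>] False by blast
    then show ?thesis using k funpow_root[OF T] by simp
  qed
qed

lemma proper_descendant_below_child:
  assumes T: "rooted_tree V r par" and "(par ^^ k) x = z" and "x \<in> V" and "x \<noteq> z"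
  shows "\<exists>c \<in> children V r par z. anc par c x"
  using assms(2-4)
proof (induction k arbitrary: x)
  case 0
  then show ?case by simp
next
  case (Suc k)
  have up: "(par ^^ k) (par x) = z" using Suc.prems(1) by (simp add: funpow_swap1)
  show ?case
  proof (cases "par x = z")
    case True
    have "par r = r" using T unfolding rooted_tree_def by blast
    then have "x \<in> children V r par z"
      using True Suc.prems(2,3) unfolding children_def by auto
    then show ?thesis using anc_refl[of par x] by blast
  next
    case False
    then obtain c where "c \<in> children V r par z" "anc par c (par x)"
      using Suc.IH[OF up rooted_tree_parent_in[OF T Suc.prems(2)]] by blast
    then show ?thesis using anc_trans[OF _ anc_parent[of par x]] by blast
  qed
qed

lemma anc_leaf:
  assumes "rooted_tree V r par" and "z \<in> leaves V r par" and "x \<in> V" and "anc par z x"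
  shows "x = z"
  using proper_descendant_below_child[OF assms(1) _ assms(3)] assms(2,4)
  unfolding leaves_def anc_def by blast

lemma lca_commute: "is_lca par s x y \<Longrightarrow> is_lca par s y x"
  unfolding is_lca_def by blast

lemma lca_self:
  assumes "rooted_tree V r par" and "x \<in> V" and "is_lca par s x x"
  shows "s = x"
proof -
  have "anc par s x" "anc par x s" using assms(3) anc_refl[of par x] unfolding is_lca_def by blast+
  then show ?thesis using anc_antisym[OF assms(1,2)] by blast
qed

lemma tpath_commute: "tpath V par x y = tpath V par y x"
  unfolding tpath_def by blast

lemma tpath_lca:
  assumes "is_lca par s x y"
  shows "tpath V par x y = {z \<in> V. (anc par z x \<or> anc par z y) \<and> anc par s z}"
proof -
  have "anc par w z" if "anc par w x" "anc par w y" "anc par s z" for w z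
    using assms that anc_trans[of par w s z] unfolding is_lca_def by blast
  then show ?thesis using assms unfolding tpath_def is_lca_def by blast
qed

lemma tpath_endpoints:
  assumes "is_lca par s x y" and "x \<in> V" and "y \<in> V"
  shows "x \<in> tpath V par x y" "y \<in> tpath V par x y"
  using assms anc_refl[of par x] anc_refl[of par y] unfolding tpath_lca[OF assms(1)] is_lca_def
  by blast+

lemma leaf_in_tpath:
  assumes "rooted_tree V r par" and "z \<in> leaves V r par" and "x \<in> V" and "y \<in> V"
    and "z \<in> tpath V par x y"
  shows "z = x \<or> z = y"
proof -
  have "anc par z x \<or> anc par z y" using assms(5) unfolding tpath_def by blast
  then show ?thesis using anc_leaf[OF assms(1,2,3)] anc_leaf[OF assms(1,2,4)] by blast
qed

lemma lca_leaf_child: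
  assumes T: "rooted_tree V r par" and l: "l \<in> leaves V r par" and "par l = v"
    and lca: "is_lca par s v y" and "y \<in> V" and "y \<noteq> l"
  shows "is_lca par s l y" and "tpath V par l y = insert l (tpath V par v y)"
proof -
  have "l \<in> V" using l unfolding leaves_def by blast
  have anc_l: "anc par z l \<longleftrightarrow> z = l \<or> anc par z v" for z
    using anc_iff_parent[of par z l] \<open>par l = v\<close> by simp
  have "anc par s l" using lca anc_trans[OF _ anc_parent, of par s l] \<open>par l = v\<close>
    unfolding is_lca_def by simp
  moreover have "anc par w s" if "anc par w l" "anc par w y" for w
  proof -
    have "w \<noteq> l" using anc_leaf[OF T l \<open>y \<in> V\<close>] that(2) \<open>y \<noteq> l\<close> by blast
    then show ?thesis using that anc_l lca unfolding is_lca_def by blast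
  qed
  ultimately show lca_l: "is_lca par s l y" using lca unfolding is_lca_def by blast
  show "tpath V par l y = insert l (tpath V par v y)"
    using \<open>l \<in> V\<close> \<open>anc par s l\<close> anc_l unfolding tpath_lca[OF lca] tpath_lca[OF lca_l] by blast
qed

lemma rooted_tree_Diff_leaves:
  assumes T: "rooted_tree V r par" and "D \<subseteq> leaves V r par" and "r \<notin> D"
  shows "rooted_tree (V - D) r par"
proof -
  have "par x \<notin> D" if "x \<in> V" "x \<noteq> r" for x
    using that assms rooted_tree_parent_in[OF T] unfolding leaves_def children_def by blast
  moreover have "par r \<notin> D" using T \<open>r \<notin> D\<close> unfolding rooted_tree_def by simp
  ultimately show ?thesis using T \<open>r \<notin> D\<close> unfolding rooted_tree_def by blast
qed

lemma tpath_Diff_leaves: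
  assumes T: "rooted_tree V r par" and "D \<subseteq> leaves V r par" and "x \<in> V - D" and "y \<in> V - D"
  shows "tpath (V - D) par x y = tpath V par x y"
  using assms anc_leaf[OF T] unfolding tpath_def by blast

lemma lca_parent: "is_lca par (par l) (par l) l"
  unfolding is_lca_def using anc_refl[of par "par l"] anc_parent[of par l] by blast

lemma tpath_parent:
  assumes T: "rooted_tree V r par" and "par l \<in> V"
  shows "tpath V par (par l) l \<subseteq> {par l, l}"
proof
  fix z assume "z \<in> tpath V par (par l) l"
  then have "anc par z (par l) \<or> anc par z l" and below: "anc par (par l) z"
    unfolding tpath_lca[OF lca_parent] by blast+
  then have "z = l \<or> anc par z (par l)" using anc_iff_parent[of par z l] by blast
  then show "z \<in> {par l, l}" using anc_antisym[OF T \<open>par l \<in> V\<close> _ below] by blast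
qed

lemma inner_node_with_leaf_children:
  assumes T: "rooted_tree V r par" and "inner_nodes V r par \<noteq> {}"
  obtains v where "v \<in> inner_nodes V r par" and "children V r par v \<subseteq> leaves V r par"
proof -
  define depth where "depth x = (LEAST k. (par ^^ k) x = r)" for x
  let ?I = "inner_nodes V r par"
  have "finite ?I" using T unfolding rooted_tree_def by simp
  then have "Max (depth ` ?I) \<in> depth ` ?I" using \<open>?I \<noteq> {}\<close> by simp
  then obtain v where v: "v \<in> ?I" and v_max: "depth v = Max (depth ` ?I)" by (metis imageE)
  have deepest: "depth x \<le> depth v" if "x \<in> ?I" for x
    using \<open>finite ?I\<close> that unfolding v_max by simp
  have "c \<in> leaves V r par" if c: "c \<in> children V r par v" for c
  proof (rule ccontr)
    assume "c \<notin> leaves V r par"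
    have "c \<in> V" "c \<noteq> r" "par c = v" using c unfolding children_def by auto
    obtain k where "(par ^^ k) c = r" using T \<open>c \<in> V\<close> unfolding rooted_tree_def by blast
    then have at_root: "(par ^^ depth c) c = r" unfolding depth_def by (rule LeastI)
    with \<open>c \<noteq> r\<close> obtain d where d: "depth c = Suc d" by (cases "depth c") auto
    with at_root \<open>par c = v\<close> have "(par ^^ d) v = r" by (simp add: funpow_swap1)
    then have "depth v \<le> d" unfolding depth_def by (rule Least_le)
    then show False using deepest[of c] \<open>c \<in> V\<close> \<open>c \<notin> leaves V r par\<close> d by simp
  qed
  with v show ?thesis using that by blast
qed

definition colour_identifies ::
  "'a set \<Rightarrow> 'a \<Rightarrow> ('a \<Rightarrow> 'a) \<Rightarrow> nat \<Rightarrow> ('a \<Rightarrow> nat) \<Rightarrow> ('a \<Rightarrow> 'a) \<Rightarrow> ('a \<Rightarrow> 'a) \<Rightarrow> bool"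
where
  "colour_identifies V r par n cl \<pi> \<sigma> \<longleftrightarrow>
     (\<forall>s \<in> inner_nodes V r par. cl s < n \<and> \<pi> s \<in> leaves V r par \<and> \<sigma> s \<in> leaves V r par \<and>
        is_lca par s (\<pi> s) (\<sigma> s)) \<and>
     (\<forall>i. unique_request V par \<pi> \<sigma> {s \<in> inner_nodes V r par. cl s = i})"

definition leaves_have_free_colour ::
  "'a set \<Rightarrow> 'a \<Rightarrow> ('a \<Rightarrow> 'a) \<Rightarrow> nat \<Rightarrow> ('a \<Rightarrow> nat) \<Rightarrow> ('a \<Rightarrow> 'a) \<Rightarrow> ('a \<Rightarrow> 'a) \<Rightarrow> bool"
where
  "leaves_have_free_colour V r par n cl \<pi> \<sigma> \<longleftrightarrow>
     (\<forall>x \<in> leaves V r par. \<exists>i<n.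
        \<forall>s \<in> inner_nodes V r par. cl s = i \<longrightarrow> x \<notin> tpath V par (\<pi> s) (\<sigma> s))"

locale leaf_children_pruning =
  fixes V :: "'a set" and r :: 'a and par :: "'a \<Rightarrow> 'a" and v :: 'a
  assumes tree: "rooted_tree V r par"
    and v_inner: "v \<in> inner_nodes V r par"
    and children_leaves: "children V r par v \<subseteq> leaves V r par"
begin

abbreviation "C \<equiv> children V r par v"
abbreviation "V' \<equiv> V - C"

lemma v_pruned: "v \<in> V'"
  using v_inner children_leaves by blast

lemma pruned_tree: "rooted_tree V' r par"
  using rooted_tree_Diff_leaves[OF tree children_leaves] unfolding children_def by blast

lemma children_pruned: "children V' r par u = (if u = v then {} else children V r par u)"
  unfolding children_def by auto

lemma leaves_pruned: "leaves V' r par = insert v (leaves V r par - C)"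
  using v_pruned unfolding leaves_def children_pruned by (auto simp: children_def)

lemma inner_pruned: "inner_nodes V' r par = inner_nodes V r par - {v}"
  using children_leaves unfolding leaves_pruned by blast

lemma redirect_pair:
  assumes l: "l \<in> C" and x: "x \<in> leaves V' r par" and y: "y \<in> leaves V' r par" and "x \<noteq> y"
    and lca: "is_lca par s x y"
  defines "f \<equiv> \<lambda>z. if z = v then l else z"
  shows "f x \<in> leaves V r par" "f y \<in> leaves V r par" "is_lca par s (f x) (f y)" (is ?lca)
    and "tpath V par (f x) (f y) =
      (if v \<in> tpath V' par x y then insert l (tpath V' par x y) else tpath V' par x y)" (is ?path)
proof -
  have l_leaf: "l \<in> leaves V r par" and "par l = v" and "l \<notin> V'"
    using l children_leaves unfolding children_def by auto
  have leaf: "f z \<in> leaves V r par" if "z \<in> leaves V' r par" for z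
    using that l_leaf unfolding f_def leaves_pruned by auto
  have leaf_V': "z \<in> V'" if "z \<in> leaves V' r par" for z
    using that unfolding leaves_def by blast
  have one_end: "is_lca par s l z \<and> tpath V par l z = insert l (tpath V' par v z) \<and>
      v \<in> tpath V' par v z"
    if "is_lca par s v z" and "z \<in> leaves V' r par" for z
  proof -
    have "z \<in> V" "z \<noteq> l" using leaf_V'[OF that(2)] \<open>l \<notin> V'\<close> by auto
    note redirected = lca_leaf_child[OF tree l_leaf \<open>par l = v\<close> that(1) this]
    have "tpath V par v z = tpath V' par v z"
      using tpath_Diff_leaves[OF tree children_leaves v_pruned leaf_V'[OF that(2)]] by simp
    then show ?thesis
      using redirected tpath_endpoints(1)[OF that(1) v_pruned leaf_V'[OF that(2)]] by simp
  qed
  show "f x \<in> leaves V r par" "f y \<in> leaves V r par" using leaf x y by blast+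
  consider "x = v" | "y = v" | "x \<noteq> v" "y \<noteq> v" by blast
  then have "?lca \<and> ?path"
  proof cases
    case 1
    then show ?thesis using one_end[of y] lca y \<open>x \<noteq> y\<close> unfolding f_def by auto
  next
    case 2
    then have "is_lca par s l x" "tpath V par l x = insert l (tpath V' par v x)"
      "v \<in> tpath V' par v x"
      using one_end[of x] lca_commute[OF lca] x by auto
    then show ?thesis
      using 2 \<open>x \<noteq> y\<close> lca_commute tpath_commute[of V par x l] tpath_commute[of V' par x v]
      unfolding f_def by auto
  next
    case 3
    have "v \<notin> tpath V' par x y"
      using 3 leaf_in_tpath[OF pruned_tree _ leaf_V'[OF x] leaf_V'[OF y]] v_pruned
      unfolding leaves_pruned by blast
    then show ?thesis
      using 3 lca tpath_Diff_leaves[OF tree children_leaves leaf_V'[OF x] leaf_V'[OF y]]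
      unfolding f_def by simp
  qed
  then show ?lca ?path by blast+
qed

end

locale recolouring = leaf_children_pruning +
  fixes n :: nat and cl' :: "'a \<Rightarrow> nat" and \<pi>' \<sigma>' :: "'a \<Rightarrow> 'a"
    and la lb :: 'a and j k\<^sub>1 k\<^sub>2 :: nat
  assumes old_identifies: "colour_identifies V' r par n cl' \<pi>' \<sigma>'"
    and old_free: "leaves_have_free_colour V' r par n cl' \<pi>' \<sigma>'"
    and new_leaves: "la \<in> C" "lb \<in> C" "la \<noteq> lb"
    and v_free: "j < n"
      "\<forall>s \<in> inner_nodes V' r par. cl' s = j \<longrightarrow> v \<notin> tpath V' par (\<pi>' s) (\<sigma>' s)"
    and other_colours: "k\<^sub>1 < n" "k\<^sub>2 < n" "k\<^sub>1 \<noteq> j" "k\<^sub>2 \<noteq> j" "k\<^sub>1 \<noteq> k\<^sub>2"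
begin

definition redirect :: "nat \<Rightarrow> 'a" where
  "redirect i = (if i = k\<^sub>1 then la else lb)"

definition cl :: "'a \<Rightarrow> nat" where
  "cl s = (if s = v then j else cl' s)"

definition \<pi> :: "'a \<Rightarrow> 'a" where
  "\<pi> s = (if s = v then la else if \<pi>' s = v then redirect (cl' s) else \<pi>' s)"

definition \<sigma> :: "'a \<Rightarrow> 'a" where
  "\<sigma> s = (if s = v then lb else if \<sigma>' s = v then redirect (cl' s) else \<sigma>' s)"

abbreviation "old_path s \<equiv> tpath V' par (\<pi>' s) (\<sigma>' s)"
abbreviation "new_path s \<equiv> tpath V par (\<pi> s) (\<sigma> s)"

lemma recoloured_pair:
  assumes s: "s \<in> inner_nodes V' r par"
  shows "\<pi> s \<in> leaves V r par" (is ?\<pi>_leaf) and "\<sigma> s \<in> leaves V r par" (is ?\<sigma>_leaf)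
    and "is_lca par s (\<pi> s) (\<sigma> s)" (is ?lca)
    and "new_path s =
      (if v \<in> old_path s then insert (redirect (cl' s)) (old_path s) else old_path s)" (is ?path)
proof -
  have "s \<noteq> v" using s v_pruned unfolding leaves_pruned by blast
  have ends: "\<pi>' s \<in> leaves V' r par" "\<sigma>' s \<in> leaves V' r par"
    and lca: "is_lca par s (\<pi>' s) (\<sigma>' s)"
    using old_identifies s unfolding colour_identifies_def by blast+
  have "\<pi>' s \<noteq> \<sigma>' s"
  proof
    assume same: "\<pi>' s = \<sigma>' s"
    have "\<pi>' s \<in> V'" using ends(1) unfolding leaves_def by blast
    moreover have "is_lca par s (\<pi>' s) (\<pi>' s)" using lca same by simp
    ultimately have "s = \<pi>' s" by (rule lca_self[OF pruned_tree])
    with s ends(1) show False by (metis DiffD2)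
  qed
  have redirect_child: "redirect (cl' s) \<in> C" using new_leaves unfolding redirect_def by simp
  note redirected = redirect_pair[OF redirect_child ends \<open>\<pi>' s \<noteq> \<sigma>' s\<close> lca]
  have "\<pi> s = (if \<pi>' s = v then redirect (cl' s) else \<pi>' s)"
    "\<sigma> s = (if \<sigma>' s = v then redirect (cl' s) else \<sigma>' s)"
    using \<open>s \<noteq> v\<close> unfolding \<pi>_def \<sigma>_def by simp_all
  then show ?\<pi>_leaf ?\<sigma>_leaf ?lca ?path using redirected by simp_all
qed

lemma v_pair: "is_lca par v la lb" "tpath V par la lb \<subseteq> {la, lb, v}"
proof -
  have la: "la \<in> leaves V r par" "par la = v" and lb: "lb \<in> V" "par lb = v"
    using new_leaves children_leaves unfolding children_def by auto
  have "is_lca par v v lb" using lca_parent[of par lb] lb by simp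
  note to_la = lca_leaf_child[OF tree la this lb(1) new_leaves(3)[symmetric]]
  show "is_lca par v la lb" by (rule to_la(1))
  show "tpath V par la lb \<subseteq> {la, lb, v}"
    using tpath_parent[OF tree, of lb] lb v_inner unfolding to_la(2) by auto
qed

lemma old_inner:
  "s \<in> inner_nodes V r par \<Longrightarrow> s \<noteq> v \<Longrightarrow> s \<in> inner_nodes V' r par \<and> cl s = cl' s"
  unfolding inner_pruned cl_def by auto

lemma redirect_not_pruned: "redirect i \<notin> V'"
  using new_leaves unfolding redirect_def by simp

lemma new_path_cases:
  assumes "s \<in> inner_nodes V' r par" and "z \<in> new_path s"
  shows "z \<in> V' \<and> z \<in> old_path s \<or> z = redirect (cl' s) \<and> v \<in> old_path s"
  using assms recoloured_pair(4)[OF assms(1)] unfolding tpath_def by (auto split: if_splits)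

lemma new_path_v: "new_path v \<subseteq> {la, lb, v}"
  using v_pair(2) unfolding \<pi>_def \<sigma>_def by simp

lemma old_unique_request:
  assumes "s \<in> inner_nodes V' r par" "t \<in> inner_nodes V' r par" "cl' s = cl' t"
    and "z \<in> old_path s" "z \<in> old_path t"
  shows "s = t"
proof -
  have "z \<in> V'" using assms(4) unfolding tpath_def by blast
  then show ?thesis
    using assms old_identifies unfolding colour_identifies_def unique_request_def by blast
qed

lemma v_path_disjoint:
  assumes t: "t \<in> inner_nodes V' r par" "cl' t = j" and "z \<in> new_path v" "z \<in> new_path t"
  shows False
proof -
  have "v \<notin> old_path t" using v_free(2) t by blast
  then have "z \<in> V' \<and> z \<in> old_path t" using new_path_cases[OF t(1) assms(4)] by blast
  moreover have "z \<in> {la, lb, v}" using new_path_v assms(3) by blast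
  ultimately show False using \<open>v \<notin> old_path t\<close> new_leaves by blast
qed

lemma recoloured_ends:
  assumes s: "s \<in> inner_nodes V r par"
  shows "cl s < n \<and> \<pi> s \<in> leaves V r par \<and> \<sigma> s \<in> leaves V r par \<and> is_lca par s (\<pi> s) (\<sigma> s)"
proof (cases "s = v")
  case True
  then show ?thesis
    using v_free(1) new_leaves children_leaves v_pair(1) unfolding cl_def \<pi>_def \<sigma>_def by auto
next
  case False
  then have "s \<in> inner_nodes V' r par" using s unfolding inner_pruned by blast
  then show ?thesis
    using False recoloured_pair old_identifies unfolding colour_identifies_def cl_def by auto
qed

lemma recoloured_unique_request: "unique_request V par \<pi> \<sigma> {s \<in> inner_nodes V r par. cl s = i}"
  unfolding unique_request_def
proof (intro ballI impI)
  fix z s t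
  assume "s \<in> {s \<in> inner_nodes V r par. cl s = i}" "t \<in> {s \<in> inner_nodes V r par. cl s = i}"
    and z: "z \<in> new_path s \<and> z \<in> new_path t"
  then have s: "s \<in> inner_nodes V r par" and t: "t \<in> inner_nodes V r par" and "cl s = cl t" by auto
  note old = old_inner[THEN conjunct1] old_inner[THEN conjunct2]
  consider "s = t" | "s = v" "t \<noteq> v" | "s \<noteq> v" "t = v" | "s \<noteq> v" "t \<noteq> v" "s \<noteq> t"
    by blast
  then show "s = t"
  proof cases
    case 2
    then have "t \<in> inner_nodes V' r par" "cl' t = j"
      using old[OF t] \<open>cl s = cl t\<close> by (simp_all add: cl_def)
    then show ?thesis using v_path_disjoint z 2(1) by blast
  next
    case 3
    then have "s \<in> inner_nodes V' r par" "cl' s = j"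
      using old[OF s] \<open>cl s = cl t\<close> by (simp_all add: cl_def)
    then show ?thesis using v_path_disjoint z 3(2) by blast
  next
    case 4
    then have "cl' s = cl' t" using old s t \<open>cl s = cl t\<close> by simp
    moreover have "old_path s \<inter> old_path t \<noteq> {}"
      using new_path_cases[OF old(1)[OF s]] new_path_cases[OF old(1)[OF t]] z 4
        redirect_not_pruned by blast
    ultimately show ?thesis using old_unique_request old(1) s t 4 by blast
  qed
qed

lemma recoloured_identifies: "colour_identifies V r par n cl \<pi> \<sigma>"
  unfolding colour_identifies_def using recoloured_ends recoloured_unique_request by blast

lemma recoloured_free_colour: "leaves_have_free_colour V r par n cl \<pi> \<sigma>"
  unfolding leaves_have_free_colour_def
proof
  fix x assume x: "x \<in> leaves V r par"
  note old = old_inner[THEN conjunct1] old_inner[THEN conjunct2]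
  show "\<exists>i<n. \<forall>s \<in> inner_nodes V r par. cl s = i \<longrightarrow> x \<notin> new_path s"
  proof (cases "x \<in> V'")
    case True
    then have "x \<in> leaves V' r par" using x unfolding leaves_pruned by blast
    then obtain i where "i < n" and free: "\<forall>s \<in> inner_nodes V' r par. cl' s = i \<longrightarrow> x \<notin> old_path s"
      using old_free unfolding leaves_have_free_colour_def by blast
    have "x \<notin> new_path s" if "s \<in> inner_nodes V r par" "cl s = i" for s
    proof (cases "s = v")
      case True
      have "x \<noteq> v" using x v_inner by blast
      then show ?thesis using new_path_v \<open>x \<in> V'\<close> new_leaves unfolding True by blast
    next
      case False
      then show ?thesis
        using free old[OF that(1)] that(2) new_path_cases[OF old(1)[OF that(1)]] \<open>x \<in> V'\<close>
          redirect_not_pruned by fastforce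
    qed
    then show ?thesis using \<open>i < n\<close> by blast
  next
    case False
    define i where "i = (if x = la then k\<^sub>2 else k\<^sub>1)"
    have "redirect i \<noteq> x" using other_colours new_leaves unfolding redirect_def i_def by auto
    have "x \<notin> new_path s" if "s \<in> inner_nodes V r par" "cl s = i" for s
    proof (cases "s = v")
      case True
      have "i \<noteq> j" using other_colours unfolding i_def by simp
      then show ?thesis using that True unfolding cl_def by simp
    next
      case False
      then show ?thesis
        using old[OF that(1)] that(2) new_path_cases[OF old(1)[OF that(1)]] \<open>x \<notin> V'\<close>
          \<open>redirect i \<noteq> x\<close> by fastforce
    qed
    moreover have "i < n" using other_colours unfolding i_def by simp
    ultimately show ?thesis by blast
  qed
qed

end

lemma (in leaf_children_pruning) recolour:
  assumes "3 \<le> n" and "2 \<le> card C"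
    and old: "colour_identifies V' r par n cl' \<pi>' \<sigma>'" "leaves_have_free_colour V' r par n cl' \<pi>' \<sigma>'"
  shows "\<exists>cl \<pi> \<sigma>. colour_identifies V r par n cl \<pi> \<sigma> \<and> leaves_have_free_colour V r par n cl \<pi> \<sigma>"
proof -
  obtain la lb where la_lb: "la \<in> C" "lb \<in> C" "la \<noteq> lb"
    using \<open>2 \<le> card C\<close> card_le_Suc0_iff_eq[of C]
    by (metis card.infinite not_less_eq_eq numeral_2_eq_2 zero_le)
  obtain j where "j < n"
    "\<forall>s \<in> inner_nodes V' r par. cl' s = j \<longrightarrow> v \<notin> tpath V' par (\<pi>' s) (\<sigma>' s)"
    using old(2) v_pruned unfolding leaves_have_free_colour_def leaves_pruned by blast
  moreover obtain k\<^sub>1 k\<^sub>2 :: nat where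
    "k\<^sub>1 < n" "k\<^sub>2 < n" "k\<^sub>1 \<noteq> j" "k\<^sub>2 \<noteq> j" "k\<^sub>1 \<noteq> k\<^sub>2"
  proof
    show "(if j = 0 then 1 else 0) < n" "(if j = 2 then 1 else 2) < n" using \<open>3 \<le> n\<close> by simp_all
  qed auto
  ultimately interpret recolouring V r par v n cl' \<pi>' \<sigma>' la lb j k\<^sub>1 k\<^sub>2
    using old la_lb by unfold_locales
  show ?thesis using recoloured_identifies recoloured_free_colour by blast
qed

lemma colour_identifies_exists:
  assumes "rooted_tree V r par"
    and "\<forall>u \<in> V. children V r par u \<noteq> {} \<longrightarrow> card (children V r par u) \<ge> 2"
    and "3 \<le> n"
  shows "\<exists>cl \<pi> \<sigma>. colour_identifies V r par n cl \<pi> \<sigma> \<and> leaves_have_free_colour V r par n cl \<pi> \<sigma>"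
  using assms(1,2)
proof (induction "card V" arbitrary: V rule: less_induct)
  case less
  show ?case
  proof (cases "inner_nodes V r par = {}")
    case True
    have "colour_identifies V r par n (\<lambda>_. 0) id id"
      using True unfolding colour_identifies_def unique_request_def by auto
    moreover have "leaves_have_free_colour V r par n (\<lambda>_. 0) id id"
      using True \<open>3 \<le> n\<close> unfolding leaves_have_free_colour_def by (auto intro!: exI[of _ 0])
    ultimately show ?thesis by blast
  next
    case False
    obtain v where "v \<in> inner_nodes V r par" "children V r par v \<subseteq> leaves V r par"
      using inner_node_with_leaf_children[OF less.prems(1) False] .
    then interpret leaf_children_pruning V r par v
      using less.prems(1) by unfold_locales
    have "2 \<le> card C" using less.prems(2) v_inner unfolding leaves_def by blast
    have "C \<noteq> {}" using \<open>2 \<le> card C\<close> by auto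
    moreover have "C \<subseteq> V" unfolding children_def by blast
    ultimately have "V' \<subset> V" by blast
    moreover have "finite V" using less.prems(1) unfolding rooted_tree_def by blast
    ultimately have "card V' < card V" by (simp add: psubset_card_mono)
    moreover have "\<forall>u \<in> V'. children V' r par u \<noteq> {} \<longrightarrow> card (children V' r par u) \<ge> 2"
      using less.prems(2) unfolding children_pruned by simp
    ultimately obtain cl' \<pi>' \<sigma>' where
      "colour_identifies V' r par n cl' \<pi>' \<sigma>'" "leaves_have_free_colour V' r par n cl' \<pi>' \<sigma>'"
      using less.hyps pruned_tree by blast
    then show ?thesis by (rule recolour[OF \<open>3 \<le> n\<close> \<open>2 \<le> card C\<close>])
  qed
qed

lemma unique_request_bicol_identifies:
  assumes T: "rooted_tree V r par" and S: "S \<subseteq> inner_nodes V r par"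
    and ends: "\<forall>s \<in> S. \<pi> s \<in> leaves V r par \<and> \<sigma> s \<in> leaves V r par \<and> is_lca par s (\<pi> s) (\<sigma> s)"
    and unique: "unique_request V par \<pi> \<sigma> S"
  shows "bicolouring V r par (\<pi> ` S) (\<sigma> ` S)" and "bicol_identifies V r par (\<pi> ` S) (\<sigma> ` S) S"
proof -
  have in_V: "\<pi> s \<in> V" "\<sigma> s \<in> V" if "s \<in> S" for s
    using ends that unfolding leaves_def by blast+
  have on_path: "\<pi> s \<in> tpath V par (\<pi> s) (\<sigma> s)" "\<sigma> s \<in> tpath V par (\<pi> s) (\<sigma> s)" if "s \<in> S" for s
    using tpath_endpoints[of par s "\<pi> s" "\<sigma> s" V] ends in_V that by blast+
  have same: "s = t" if "s \<in> S" "t \<in> S" "x \<in> tpath V par (\<pi> s) (\<sigma> s)" "x \<in> tpath V par (\<pi> t) (\<sigma> t)"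
    for s t x
    using unique that unfolding unique_request_def tpath_def by blast
  have inj: "inj_on \<pi> S" "inj_on \<sigma> S"
    using on_path same by (metis inj_onI)+
  have "\<pi> s \<noteq> \<sigma> t" if "s \<in> S" "t \<in> S" for s t
  proof
    assume "\<pi> s = \<sigma> t"
    then have "s = t" using same[OF that] on_path that by metis
    with \<open>\<pi> s = \<sigma> t\<close> have "\<sigma> s = \<pi> s" by simp
    then have "is_lca par s (\<pi> s) (\<pi> s)" using ends that(1) by metis
    then have "s = \<pi> s" using lca_self[OF T in_V(1)] that by blast
    then show False using S ends that by (metis DiffD2 subsetD)
  qed
  then have "\<pi> ` S \<inter> \<sigma> ` S = {}" by blast
  then show "bicolouring V r par (\<pi> ` S) (\<sigma> ` S)"
    using ends inj card_image unfolding bicolouring_def by (metis image_subsetI)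
  show "bicol_identifies V r par (\<pi> ` S) (\<sigma> ` S) S"
    using S ends inj unique unfolding bicol_identifies_def pair_identifies_def by blast
qed

lemma colour_identifies_imp_family:
  assumes T: "rooted_tree V r par" and col: "colour_identifies V r par n cl \<pi> \<sigma>"
  shows "\<exists>A B. (\<forall>i<n. bicolouring V r par (A i) (B i)) \<and> family_identifies_tree V r par n A B"
proof -
  define P where "P i = {s \<in> inner_nodes V r par. cl s = i}" for i
  have each_class:
    "bicolouring V r par (\<pi> ` P i) (\<sigma> ` P i) \<and> bicol_identifies V r par (\<pi> ` P i) (\<sigma> ` P i) (P i)"
    for i
    using unique_request_bicol_identifies[OF T, of "P i" \<pi> \<sigma>] col
    unfolding colour_identifies_def P_def by auto
  have "(\<Union>i<n. P i) = inner_nodes V r par" using col unfolding colour_identifies_def P_def by auto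
  moreover have "\<forall>i<n. \<forall>j<n. i \<noteq> j \<longrightarrow> P i \<inter> P j = {}" unfolding P_def by auto
  ultimately have "family_identifies_tree V r par n (\<lambda>i. \<pi> ` P i) (\<lambda>i. \<sigma> ` P i)"
    using each_class unfolding family_identifies_tree_def family_identifies_def
    by (intro exI[of _ P]) simp
  then show ?thesis
    using each_class by (intro exI[of _ "\<lambda>i. \<pi> ` P i"] exI[of _ "\<lambda>i. \<sigma> ` P i"]) simp
qed

theorem corollary3p10:
  fixes V :: "'a set" and r :: 'a and par :: "'a \<Rightarrow> 'a"
  assumes "rooted_tree V r par"
    and "\<forall>v\<in>V. children V r par v \<noteq> {} \<longrightarrow> card (children V r par v) \<ge> 2"
  shows "\<exists>A B :: nat \<Rightarrow> 'a set.
           (\<forall>i<4. bicolouring V r par (A i) (B i)) \<and>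
           family_identifies_tree V r par 4 A B"
proof -
  obtain cl \<pi> \<sigma> where "colour_identifies V r par 4 cl \<pi> \<sigma>"
    using colour_identifies_exists[OF assms, of 4] by auto
  then show ?thesis by (rule colour_identifies_imp_family[OF assms(1)])
qed

end
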